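(* Let $n\ge 1$ and let $A=[a_{ij}]\in\{0,1\}^{2n\times 2n}$ be symmetric with zero diagonal, with row sums $r_i=\sum_j a_{ij}$. Then for each $i\in\{1,\dots,2n\}$, $$(\mathrm{hafn}\, A)^{\mathrm{hafn}\, A}\le r_i^{\mathrm{hafn}\, A}\prod_{j:\, a_{ij}=1}\big(\mathrm{hafn}\, A(i,j)\big)^{\mathrm{hafn}\, A(i,j)},$$ with the convention $0^0=1$.
   Context: For a real symmetric $2n\times 2n$ matrix $A=[a_{ij}]$, the hafnian is $\mathrm{hafn}\, A=\sum \prod_{k=1}^n a_{i_kj_k}$, where the sum runs over all partitions $\{\{i_1,j_1\},\dots,\{i_n,j_n\}\}$ of $\{1,\dots,2n\}$ into $n$ pairs (with $i_k<j_k$); the hafnian of the empty $0\times0$ matrix is $1$. $A(i,j)$ is the matrix obtained from $A$ by deleting rows $i,j$ and columns $i,j$. *)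

theory Defs
  imports Main "HOL-Library.Infinite_Set"
begin

definition perfect_matching :: "nat set \<Rightarrow> nat set set \<Rightarrow> bool" where
  "perfect_matching S M \<longleftrightarrow>
     (\<forall>e\<in>M. e \<subseteq> S \<and> card e = 2) \<and>
     (\<forall>e\<in>M. \<forall>e'\<in>M. e \<noteq> e' \<longrightarrow> e \<inter> e' = {}) \<and>
     \<Union>M = S"

definition hafn_on :: "(nat \<Rightarrow> nat \<Rightarrow> 'a::comm_semiring_1) \<Rightarrow> nat set \<Rightarrow> 'a" where
  "hafn_on A S = (\<Sum>M\<in>{M. perfect_matching S M}. \<Prod>e\<in>M. A (Min e) (Max e))"

(* hafnian of an m x m matrix A with (0-based) indices 0..m-1; hafn 0 A = 1 *)
definition hafn :: "nat \<Rightarrow> (nat \<Rightarrow> nat \<Rightarrow> 'a::comm_semiring_1) \<Rightarrow> 'a" where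
  "hafn m A = hafn_on A {0..<m}"

(* A(i,j): delete rows i,j and columns i,j, re-indexing the remaining ones in order *)
definition del2 :: "(nat \<Rightarrow> nat \<Rightarrow> 'a) \<Rightarrow> nat \<Rightarrow> nat \<Rightarrow> nat \<Rightarrow> nat \<Rightarrow> 'a" where
  "del2 A i j = (\<lambda>a b. A (enumerate (UNIV - {i, j}) a) (enumerate (UNIV - {i, j}) b))"

end

theory Submission
  imports Defs "HOL-Analysis.Convex"
begin

(*
  Expanding the hafnian along row i gives hafn A = sum over the partners j
  of i (the j with a_ij = 1) of h_j = hafn A(i,j).  The theorem is then an instance of
  the entropy-type inequality  H^H <= |N|^H * prod_j h_j^(h_j)  for any finite family of
  natural numbers h_j (j in N) with sum H; it follows from Jensen's inequality for the
  concave logarithm (weights h_j/H at the points H/h_j), after discarding the h_j = 0.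
*)

section \<open>An entropy inequality\<close>

text \<open>Jensen's inequality for ln, weights x_j/H at the points H/x_j:
  sum_j x_j ln(H/x_j) <= H ln |N|, rearranged.\<close>
lemma log_sum_inequality:
  fixes x :: "'a \<Rightarrow> real"
  assumes fin: "finite N" and ne: "N \<noteq> {}" and pos: "\<And>j. j \<in> N \<Longrightarrow> x j > 0"
  defines "H \<equiv> (\<Sum>j\<in>N. x j)"
  shows "H * ln H \<le> H * ln (card N) + (\<Sum>j\<in>N. x j * ln (x j))"
proof -
  have Hpos: "H > 0"
    unfolding H_def using fin ne pos by (intro sum_pos) auto
  have nonzero: "x j \<noteq> 0" if "j \<in> N" for j using pos[OF that] by simp
  have weights: "(\<Sum>j\<in>N. x j / H) = 1"
    using Hpos by (simp add: sum_divide_distrib[symmetric] H_def)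
  have "(\<Sum>j\<in>N. (x j / H) * ln (H / x j)) \<le> ln (\<Sum>j\<in>N. (x j / H) *\<^sub>R (H / x j))"
    using pos Hpos by (intro concave_on_sum[OF fin ne ln_concave weights]) (auto simp: less_imp_le)
  also have "(\<Sum>j\<in>N. (x j / H) *\<^sub>R (H / x j)) = (\<Sum>j\<in>N. 1)"
    using Hpos nonzero by (intro sum.cong) auto
  finally have jensen: "(\<Sum>j\<in>N. (x j / H) * ln (H / x j)) \<le> ln (card N)" by simp
  have "(\<Sum>j\<in>N. (x j / H) * ln (H / x j)) = (\<Sum>j\<in>N. (x j / H) * (ln H - ln (x j)))"
    using Hpos pos by (intro sum.cong) (auto simp: ln_div)
  also have "\<dots> = (\<Sum>j\<in>N. x j / H) * ln H - (\<Sum>j\<in>N. x j * ln (x j)) / H"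
    by (simp add: right_diff_distrib sum_subtractf sum_distrib_right sum_divide_distrib)
  also have "\<dots> = ln H - (\<Sum>j\<in>N. x j * ln (x j)) / H"
    using weights by simp
  finally have "ln H - (\<Sum>j\<in>N. x j * ln (x j)) / H \<le> ln (card N)"
    using jensen by simp
  with Hpos show ?thesis by (simp add: field_simps)
qed

lemma entropy_inequality_pos:
  fixes h :: "'a \<Rightarrow> nat"
  assumes fin: "finite N" and ne: "N \<noteq> {}" and pos: "\<And>j. j \<in> N \<Longrightarrow> h j > 0"
  defines "H \<equiv> (\<Sum>j\<in>N. h j)"
  shows "H ^ H \<le> card N ^ H * (\<Prod>j\<in>N. h j ^ h j)"
proof -
  have Hpos: "H > 0" unfolding H_def using fin ne pos by (intro sum_pos) auto
  have cpos: "card N > 0" using fin ne by (simp add: card_gt_0_iff)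
  have powers_pos: "(\<Prod>j\<in>N. real (h j) ^ h j) > 0" using pos by (intro prod_pos) auto
  have ln_rhs: "ln (real (card N ^ H * (\<Prod>j\<in>N. h j ^ h j)))
              = real H * ln (card N) + (\<Sum>j\<in>N. real (h j) * ln (h j))"
  proof -
    have "real (card N ^ H * (\<Prod>j\<in>N. h j ^ h j)) = real (card N) ^ H * (\<Prod>j\<in>N. real (h j) ^ h j)"
      by simp
    hence "ln (real (card N ^ H * (\<Prod>j\<in>N. h j ^ h j)))
           = ln (real (card N) ^ H) + ln (\<Prod>j\<in>N. real (h j) ^ h j)"
      using cpos powers_pos by (simp add: ln_mult_pos del: of_nat_power)
    also have "ln (\<Prod>j\<in>N. real (h j) ^ h j) = (\<Sum>j\<in>N. ln (real (h j) ^ h j))"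
      using pos fin by (intro ln_prod) auto
    also have "\<dots> = (\<Sum>j\<in>N. real (h j) * ln (h j))"
      using pos by (intro sum.cong) (auto simp: ln_realpow)
    finally show ?thesis using cpos by (simp add: ln_realpow)
  qed
  have "ln (real (H ^ H)) = real H * ln H" using Hpos by (simp add: ln_realpow)
  also have "\<dots> \<le> real H * ln (card N) + (\<Sum>j\<in>N. real (h j) * ln (h j))"
    using log_sum_inequality[OF fin ne, of "\<lambda>j. real (h j)"] pos by (simp add: H_def)
  also have "\<dots> = ln (real (card N ^ H * (\<Prod>j\<in>N. h j ^ h j)))" by (rule ln_rhs[symmetric])
  finally have "real (H ^ H) \<le> real (card N ^ H * (\<Prod>j\<in>N. h j ^ h j))"
    using Hpos cpos powers_pos by (subst (asm) ln_le_cancel_iff) auto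
  thus ?thesis by linarith
qed

text \<open>The same inequality for arbitrary natural numbers: zero terms contribute nothing
  to the sum or the product (0^0 = 1) and only shrink the count.\<close>
lemma entropy_inequality:
  fixes h :: "'a \<Rightarrow> nat"
  assumes fin: "finite N"
  shows "(\<Sum>j\<in>N. h j) ^ (\<Sum>j\<in>N. h j) \<le> card N ^ (\<Sum>j\<in>N. h j) * (\<Prod>j\<in>N. h j ^ h j)"
proof -
  define P where "P = {j\<in>N. h j > 0}"
  have finP: "finite P" using fin by (simp add: P_def)
  have sum_eq: "(\<Sum>j\<in>N. h j) = (\<Sum>j\<in>P. h j)"
    using fin by (intro sum.mono_neutral_right) (auto simp: P_def)
  have prod_eq: "(\<Prod>j\<in>N. h j ^ h j) = (\<Prod>j\<in>P. h j ^ h j)"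
    using fin by (intro prod.mono_neutral_right) (auto simp: P_def)
  show ?thesis
  proof (cases "P = {}")
    case True
    then show ?thesis using sum_eq prod_eq by simp
  next
    case False
    have "(\<Sum>j\<in>P. h j) ^ (\<Sum>j\<in>P. h j) \<le> card P ^ (\<Sum>j\<in>P. h j) * (\<Prod>j\<in>P. h j ^ h j)"
      using entropy_inequality_pos[OF finP False] by (simp add: P_def)
    also have "\<dots> \<le> card N ^ (\<Sum>j\<in>P. h j) * (\<Prod>j\<in>P. h j ^ h j)"
      using fin by (intro mult_right_mono power_mono card_mono) (auto simp: P_def)
    finally show ?thesis using sum_eq prod_eq by simp
  qed
qed

section \<open>Perfect matchings and the row expansion of the hafnian\<close>

lemma finite_perfect_matchings: "finite S \<Longrightarrow> finite {M. perfect_matching S M}"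
  by (rule finite_subset[of _ "Pow (Pow S)"]) (auto simp: perfect_matching_def)

lemma perfect_matching_finite: "finite S \<Longrightarrow> perfect_matching S M \<Longrightarrow> finite M"
  by (rule finite_subset[of _ "Pow S"]) (auto simp: perfect_matching_def)

lemma perfect_matching_partner:
  assumes "perfect_matching S M" and "i \<in> S"
  obtains j where "j \<in> S - {i}" and "{i, j} \<in> M"
proof -
  obtain e where e: "e \<in> M" "i \<in> e" using assms unfolding perfect_matching_def by blast
  with assms(1) have "e \<subseteq> S" "card e = 2" unfolding perfect_matching_def by auto
  then obtain x y where "e = {x, y}" "x \<noteq> y" by (meson card_2_iff)
  then obtain j where "e = {i, j}" "j \<noteq> i" using e(2) by auto
  with e \<open>e \<subseteq> S\<close> show ?thesis using that by blast
qed

lemma perfect_matching_remove_block: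
  assumes pm: "perfect_matching S M" and e: "e \<in> M"
  shows "perfect_matching (S - e) (M - {e})"
proof -
  have blocks: "\<And>e'. e' \<in> M \<Longrightarrow> e' \<subseteq> S \<and> card e' = 2"
    and disj: "\<And>e' e''. e' \<in> M \<Longrightarrow> e'' \<in> M \<Longrightarrow> e' \<noteq> e'' \<Longrightarrow> e' \<inter> e'' = {}"
    and cover: "\<Union>M = S"
    using pm unfolding perfect_matching_def by blast+
  have "\<Union>(M - {e}) = S - e"
  proof
    show "\<Union>(M - {e}) \<subseteq> S - e" using blocks disj[OF _ e] by blast
    show "S - e \<subseteq> \<Union>(M - {e})" using cover by blast
  qed
  moreover have "e' \<subseteq> S - e" if "e' \<in> M - {e}" for e'
    using that blocks disj[OF _ e] by blast
  ultimately show ?thesis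
    using blocks disj unfolding perfect_matching_def by (meson DiffD1)
qed

lemma perfect_matching_insert_block:
  assumes "perfect_matching (S - e) M" and "e \<subseteq> S" and "card e = 2"
  shows "perfect_matching S (insert e M)"
  using assms unfolding perfect_matching_def by auto

lemma block_notin_perfect_matching: "perfect_matching T M \<Longrightarrow> i \<notin> T \<Longrightarrow> {i, j} \<notin> M"
  by (auto simp: perfect_matching_def)

lemma perfect_matchings_by_partner:
  assumes i: "i \<in> S"
  shows "{M. perfect_matching S M}
         = (\<Union>j\<in>S - {i}. insert {i, j} ` {M. perfect_matching (S - {i, j}) M})"
proof
  show "{M. perfect_matching S M} \<subseteq> (\<Union>j\<in>S - {i}. insert {i, j} ` {M. perfect_matching (S - {i, j}) M})"
  proof
    fix M assume "M \<in> {M. perfect_matching S M}"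
    hence pm: "perfect_matching S M" by simp
    obtain j where j: "j \<in> S - {i}" "{i, j} \<in> M" using perfect_matching_partner[OF pm i] .
    have "M = insert {i, j} (M - {{i, j}})" using j by auto
    with perfect_matching_remove_block[OF pm j(2)] j(1)
    show "M \<in> (\<Union>j\<in>S - {i}. insert {i, j} ` {M. perfect_matching (S - {i, j}) M})" by blast
  qed
next
  show "(\<Union>j\<in>S - {i}. insert {i, j} ` {M. perfect_matching (S - {i, j}) M}) \<subseteq> {M. perfect_matching S M}"
    using i by (auto intro!: perfect_matching_insert_block)
qed

lemma hafn_on_expand:
  fixes A :: "nat \<Rightarrow> nat \<Rightarrow> 'a::comm_semiring_1"
  assumes fin: "finite S" and i: "i \<in> S" and sym: "\<forall>a\<in>S. \<forall>b\<in>S. A a b = A b a"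
  shows "hafn_on A S = (\<Sum>j\<in>S - {i}. A i j * hafn_on A (S - {i, j}))"
proof -
  define P where "P j = {M. perfect_matching (S - {i, j}) M}" for j
  have disjoint: "insert {i, j} ` P j \<inter> insert {i, k} ` P k = {}"
    if j: "j \<in> S - {i}" and k: "k \<in> S - {i}" and jk: "j \<noteq> k" for j k
  proof (rule ccontr)
    assume "insert {i, j} ` P j \<inter> insert {i, k} ` P k \<noteq> {}"
    then obtain M where M: "M \<in> P k" "{i, j} \<in> insert {i, k} M" unfolding P_def by blast
    have "{i, j} \<notin> M"
      using M(1) block_notin_perfect_matching[of "S - {i, k}" M i j] by (simp add: P_def)
    with M(2) have "{i, j} = {i, k}" by blast
    with jk j show False by (auto simp: doubleton_eq_iff)
  qed
  have block_of_i: "(\<Sum>M\<in>insert {i, j} ` P j. \<Prod>e\<in>M. A (Min e) (Max e)) = A i j * hafn_on A (S - {i, j})"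
    if j: "j \<in> S - {i}" for j
  proof -
    have entry: "A (Min {i, j}) (Max {i, j}) = A i j"
      using sym i j by (cases "i < j") (auto simp: insert_commute)
    have fresh: "finite M \<and> {i, j} \<notin> M" if "M \<in> P j" for M
      using that fin perfect_matching_finite[of "S - {i, j}"]
        block_notin_perfect_matching[of "S - {i, j}" M i j] by (auto simp: P_def)
    have "inj_on (insert {i, j}) (P j)"
    proof (rule inj_onI)
      fix X Y assume "X \<in> P j" "Y \<in> P j" "insert {i, j} X = insert {i, j} Y"
      with fresh show "X = Y" by (meson insert_ident)
    qed
    hence "(\<Sum>M\<in>insert {i, j} ` P j. \<Prod>e\<in>M. A (Min e) (Max e))
           = (\<Sum>M\<in>P j. \<Prod>e\<in>insert {i, j} M. A (Min e) (Max e))"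
      by (simp add: sum.reindex)
    also have "\<dots> = (\<Sum>M\<in>P j. A i j * (\<Prod>e\<in>M. A (Min e) (Max e)))"
      using fresh entry by (intro sum.cong) auto
    finally show ?thesis by (simp add: hafn_on_def P_def sum_distrib_left)
  qed
  have "hafn_on A S = (\<Sum>j\<in>S - {i}. \<Sum>M\<in>insert {i, j} ` P j. \<Prod>e\<in>M. A (Min e) (Max e))"
    unfolding hafn_on_def perfect_matchings_by_partner[OF i] P_def[symmetric]
    using fin disjoint by (intro sum.UNION_disjoint) (auto simp: P_def finite_perfect_matchings)
  also have "\<dots> = (\<Sum>j\<in>S - {i}. A i j * hafn_on A (S - {i, j}))"
    using block_of_i by simp
  finally show ?thesis .
qed

section \<open>The hafnian of the reduced matrix A(i,j)\<close>

lemma perfect_matching_image: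
  assumes inj: "inj f" and pm: "perfect_matching T M"
  shows "perfect_matching (f ` T) (image f ` M)"
  unfolding perfect_matching_def
proof (intro conjI ballI impI)
  fix e' assume "e' \<in> image f ` M"
  then obtain e where "e \<in> M" "e' = f ` e" by blast
  with pm inj show "e' \<subseteq> f ` T" "card e' = 2"
    unfolding perfect_matching_def by (auto simp: card_image inj_on_subset)
next
  fix e' e'' assume "e' \<in> image f ` M" "e'' \<in> image f ` M" "e' \<noteq> e''"
  then obtain x y where "x \<in> M" "y \<in> M" "x \<noteq> y" "e' = f ` x" "e'' = f ` y" by blast
  with pm inj show "e' \<inter> e'' = {}"
    unfolding perfect_matching_def by (simp add: image_Int[symmetric])
next
  show "\<Union>(image f ` M) = f ` T" using pm unfolding perfect_matching_def by blast
qed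

lemma perfect_matching_vimage:
  assumes inj: "inj f" and pm: "perfect_matching (f ` T) M"
  shows "perfect_matching T ((\<lambda>e. f -` e) ` M)"
  unfolding perfect_matching_def
proof (intro conjI ballI impI)
  fix e' assume "e' \<in> (\<lambda>e. f -` e) ` M"
  then obtain e where e: "e \<in> M" "e' = f -` e" by auto
  have sub: "e \<subseteq> f ` T" "card e = 2" using pm e(1) unfolding perfect_matching_def by auto
  show "e' \<subseteq> T" using sub(1) e(2) inj by (auto simp: inj_eq)
  have "f ` e' = e" using sub(1) e(2) by blast
  thus "card e' = 2" using sub(2) inj by (metis card_image inj_on_subset subset_UNIV)
next
  fix e' e'' assume "e' \<in> (\<lambda>e. f -` e) ` M" "e'' \<in> (\<lambda>e. f -` e) ` M" "e' \<noteq> e''"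
  then obtain x y where "x \<in> M" "y \<in> M" "x \<noteq> y" "e' = f -` x" "e'' = f -` y" by blast
  with pm show "e' \<inter> e'' = {}" unfolding perfect_matching_def by (metis vimage_Int vimage_empty)
next
  have "\<Union>((\<lambda>e. f -` e) ` M) = f -` \<Union>M" by blast
  also have "\<dots> = f -` (f ` T)" using pm unfolding perfect_matching_def by simp
  finally show "\<Union>((\<lambda>e. f -` e) ` M) = T" using inj by (simp add: inj_vimage_image_eq)
qed

text \<open>Reindexing the hafnian along an order-preserving injection: the matchings of
  f ` T are exactly the images of those of T, and f commutes with Min and Max.\<close>
lemma hafn_on_reindex:
  fixes A :: "nat \<Rightarrow> nat \<Rightarrow> 'a::comm_semiring_1"
  assumes sm: "strict_mono f"
  shows "hafn_on (\<lambda>a b. A (f a) (f b)) T = hafn_on A (f ` T)"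
proof -
  have inj: "inj f" using sm by (rule strict_mono_imp_inj_on)
  have inj_img: "inj (image f)" using inj by (simp add: inj_on_def inj_image_eq_iff)
  have inj_g: "inj_on (image (image f)) X" for X
    by (rule inj_onI) (simp add: inj_image_eq_iff[OF inj_img])
  have matchings: "{M. perfect_matching (f ` T) M} = image (image f) ` {M. perfect_matching T M}"
  proof
    show "{M. perfect_matching (f ` T) M} \<subseteq> image (image f) ` {M. perfect_matching T M}"
    proof
      fix M assume "M \<in> {M. perfect_matching (f ` T) M}"
      hence pm: "perfect_matching (f ` T) M" by simp
      have image_vimage: "f ` (f -` e) = e" if "e \<in> M" for e
      proof -
        have "e \<subseteq> f ` T" using pm that by (simp add: perfect_matching_def)
        thus ?thesis by auto
      qed
      have "image (image f) ((\<lambda>e. f -` e) ` M) = (\<lambda>e. e) ` M"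
        unfolding image_image by (rule image_cong[OF refl]) (simp only: image_vimage)
      hence "M = image (image f) ((\<lambda>e. f -` e) ` M)" by simp
      with perfect_matching_vimage[OF inj pm]
      show "M \<in> image (image f) ` {M. perfect_matching T M}" by blast
    qed
  qed (use perfect_matching_image[OF inj] in blast)
  have Min_Max: "A (Min (f ` e)) (Max (f ` e)) = A (f (Min e)) (f (Max e))"
    if "finite e" "e \<noteq> {}" for e
    using that strict_mono_mono[OF sm] by (simp add: mono_Min_commute mono_Max_commute)
  have blocks: "finite e \<and> e \<noteq> {}" if "perfect_matching T M" "e \<in> M" for M e
    using that unfolding perfect_matching_def by (auto intro: card_ge_0_finite)
  have "hafn_on A (f ` T) = (\<Sum>M\<in>{M. perfect_matching T M}. \<Prod>e\<in>image f ` M. A (Min e) (Max e))"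
    unfolding hafn_on_def matchings by (simp add: sum.reindex[OF inj_g])
  also have "\<dots> = (\<Sum>M\<in>{M. perfect_matching T M}. \<Prod>e\<in>M. A (f (Min e)) (f (Max e)))"
    using blocks Min_Max
    by (intro sum.cong refl) (simp add: prod.reindex[OF inj_on_subset[OF inj_img]])
  finally show ?thesis unfolding hafn_on_def by simp
qed

text \<open>The enumeration of the naturals without i and j maps {0..<m-2} onto {0..<m} - {i,j}:
  it is strictly increasing, and the first m-2 values exhaust that set.\<close>
lemma enumerate_without_two:
  fixes i j m :: nat
  assumes "i < m" "j < m" "i \<noteq> j"
  shows "enumerate (UNIV - {i, j}) ` {0..<m-2} = {0..<m} - {i, j}"
proof -
  let ?f = "enumerate (UNIV - {i, j})"
  have inf: "infinite (UNIV - {i, j} :: nat set)" by simp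
  have inj: "inj ?f" using inf by (intro strict_mono_imp_inj_on) (simp add: strict_mono_def enumerate_mono)
  have card_target: "card ({0..<m} - {i, j}) = m - 2" using assms by (simp add: card_Diff_subset)
  have "{0..<m} - {i, j} \<subseteq> ?f ` {0..<m-2}"
  proof
    fix x assume x: "x \<in> {0..<m} - {i, j}"
    then obtain k where k: "?f k = x" using enumerate_Ex[OF inf] by auto
    have "?f ` {0..k} \<subseteq> {0..<m} - {i, j}"
    proof
      fix y assume "y \<in> ?f ` {0..k}"
      then obtain k' where "k' \<le> k" "y = ?f k'" by auto
      moreover have "?f k' \<le> ?f k" using \<open>k' \<le> k\<close> inf by simp
      moreover have "?f k' \<in> UNIV - {i, j}" using inf by (rule enumerate_in_set)
      ultimately show "y \<in> {0..<m} - {i, j}" using x k by auto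
    qed
    hence "k + 1 \<le> m - 2"
      using card_target card_mono[of "{0..<m} - {i, j}" "?f ` {0..k}"] inj
      by (simp add: card_image inj_on_subset)
    thus "x \<in> ?f ` {0..<m-2}" using k by auto
  qed
  moreover have "card (?f ` {0..<m-2}) = m - 2" using inj by (simp add: card_image inj_on_subset)
  ultimately show ?thesis using card_target by (intro card_subset_eq[symmetric]) auto
qed

lemma hafn_del2:
  fixes A :: "nat \<Rightarrow> nat \<Rightarrow> 'a::comm_semiring_1"
  assumes "i < m" "j < m" "i \<noteq> j"
  shows "hafn (m - 2) (del2 A i j) = hafn_on A ({0..<m} - {i, j})"
proof -
  have "strict_mono (enumerate (UNIV - {i, j} :: nat set))"
    by (simp add: strict_mono_def enumerate_mono)
  thus ?thesis
    unfolding hafn_def del2_def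
    by (simp add: hafn_on_reindex enumerate_without_two[OF assms])
qed

lemma sum_zero_one_weights:
  fixes a g :: "'a \<Rightarrow> nat"
  assumes "finite S" and "\<forall>j\<in>S. a j \<in> {0, 1}"
  shows "(\<Sum>j\<in>S. a j * g j) = (\<Sum>j\<in>{j\<in>S. a j = 1}. g j)"
proof -
  have "(\<Sum>j\<in>S. a j * g j) = (\<Sum>j\<in>{j\<in>S. a j = 1}. a j * g j)"
    using assms by (intro sum.mono_neutral_right) auto
  thus ?thesis by simp
qed

theorem lemma3p1:
  fixes n :: nat and A :: "nat \<Rightarrow> nat \<Rightarrow> nat" and i :: nat
  assumes "n \<ge> 1"
    and "\<forall>a<2*n. \<forall>b<2*n. A a b \<in> {0, 1}"
    and "\<forall>a<2*n. \<forall>b<2*n. A a b = A b a"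
    and "\<forall>a<2*n. A a a = 0"
    and "i < 2*n"
  shows "(hafn (2*n) A) ^ (hafn (2*n) A)
         \<le> (\<Sum>j<2*n. A i j) ^ (hafn (2*n) A) *
            (\<Prod>j\<in>{j. j < 2*n \<and> A i j = 1}.
               (hafn (2*n-2) (del2 A i j)) ^ (hafn (2*n-2) (del2 A i j)))"
proof -
  define N where "N = {j. j < 2*n \<and> A i j = 1}"
  define h where "h j = hafn (2*n-2) (del2 A i j)" for j
  have partners: "N = {j \<in> {0..<2*n} - {i}. A i j = 1}" using assms(4,5) by (auto simp: N_def)
  have "hafn (2*n) A = (\<Sum>j\<in>{0..<2*n} - {i}. A i j * hafn_on A ({0..<2*n} - {i, j}))"
    unfolding hafn_def using assms(3,5) by (intro hafn_on_expand) auto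
  also have "\<dots> = (\<Sum>j\<in>{0..<2*n} - {i}. A i j * h j)"
    using assms(5) by (intro sum.cong) (auto simp: h_def hafn_del2)
  also have "\<dots> = (\<Sum>j\<in>N. h j)"
    unfolding partners using assms(2,5) by (intro sum_zero_one_weights) auto
  finally have hafn_sum: "hafn (2*n) A = (\<Sum>j\<in>N. h j)" .
  have "(\<Sum>j<2*n. A i j) = (\<Sum>j<2*n. A i j * 1)" by simp
  also have "\<dots> = card N"
    using assms(2,5) sum_zero_one_weights[of "{..<2*n}" "A i" "\<lambda>_. 1"]
    by (simp add: N_def lessThan_def)
  finally have row_sum: "(\<Sum>j<2*n. A i j) = card N" .
  show ?thesis
    using entropy_inequality[of N h]
    unfolding hafn_sum row_sum N_def[symmetric] h_def[symmetric] by (simp add: N_def)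
qed

end
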